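(* Fix $\varepsilon>0$ and a request sequence. If c-REShare$(\varepsilon)$ places the jobs of request $r$ in a node at layer $\ell^*(r)$, then both OPT and SHA$(\varepsilon)$ place every job $(r,v)$, $v\in\mathcal V_r$, in some node at some layer $\ell'\le\ell^*(r)$.
   Context: Network: an undirected layered graph whose vertices (nodes) are datacenters. A node is at layer $\ell\ge 0$ if its distance in links from the closest leaf is $\ell$ (leaves are at layer $0$). Every node can host arbitrarily many virtual machines (VMs). Each VM $b$ runs exactly one VNF $v$ from a finite set $\mathcal V$, has maximum computing capability $\bar\mu>0$ and an allocated capability $\mu_b\le\bar\mu$. Each VNF $v$ has computing complexity $\theta_v\in(0,1]$. Requests: requests $r$ arrive online; each has a set $\mathcal V_r\subseteq\mathcal V$ of VNFs, arrival time $a_r$, duration $\tau_r$, traffic load $\lambda_r\ge\lambda_{\min}$ where $\lambda_{\min}=\inf_r\lambda_r>0$ is known in advance, end-to-end delay target $D_r$, and an arrival leaf. For $v\in\mathcal V_r$, $(r,v)$ is a job; jobs of $r$ exist during $[a_r,a_r+\tau_r)$. For a VM $b$ running $v$, $\Lambda(b)$ is the total load of jobs on $b$, and each job on $b$ experiences processing latency $1/(\mu_b-\theta_v\Lambda(b))$. Forwarding latency from a leaf to layer $\ell$ is $d_\ell$, with $d_{\ell+1}>d_\ell$. The latency of $r$ is the maximum of $d_\ell$ over layers hosting its jobs plus the sum of processing latencies of its jobs. Fair delay allocation: $M_{r,v}=1/(\bar\mu-\theta_v\lambda_r)$; $\ell^*(r)$ is the highest layer $\ell$ with $d_\ell+\sum_{v\in\mathcal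 V_r}M_{r,v}\le D_r$; $D_r^v=\frac{M_{r,v}}{\sum_{u\in\mathcal V_r}M_{r,u}}(D_r-d_{\ell^*(r)})$. A deployment of $r$ is feasible if each job $(r,v)$ is on a VM $b$ running $v$ with $\mu_b\le\bar\mu$ and $1/(\mu_b-\theta_v\Lambda(b))\le D_r^v$, and the latency of $r$ is at most $D_r$. Cost: a VM $b$ at a node of layer $\ell$ that hosts at least one job costs $\kappa_f^\ell+\kappa_p^\ell\mu_b$, with $\kappa_f^{\ell+1}<\kappa_f^\ell$ and $\kappa_p^{\ell+1}<\kappa_p^\ell$. OPT denotes a minimum-cost feasible deployment of all requests computed with full knowledge of the request sequence. Latency ranges: for $\varepsilon>0$, $L_0=[\frac{1}{\bar\mu-\lambda_{\min}},\frac{1}{\bar\mu-\lambda_{\min}(1+\varepsilon)}]$, $L_j=(\frac{1}{\bar\mu-\lambda_{\min}(1+\varepsilon)^j},\frac{1}{\bar\mu-\lambda_{\min}(1+\varepsilon)^{j+1}}]$ for $j\ge1$ (indices with $\lambda_{\min}(1+\varepsilon)^{j+1}<\bar\mu$); job $(r,v)$ is associated with $L_j$ if $D_r^v\in L_j$. Algorithm c-REShare$(\varepsilon)$: on arrival of $r$, pick a node $i^*$ at layer $\ell^*(r)$; for each $v\in\mathcal V_r$ with $D_r^v\in L_j$, place $(r,v)$ (best fit: largest $\Lambda(b)$) on a VM in $i^*$ running $v$ that hosts only jobs associated with $L_j$ and for which running at speed $\bar\mu$ with the added load keeps every job's processing latency within its fair delay allocation, opening a new VM if none exists; VM capabilities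 are set to $\theta_v\Lambda(b)+1/\min_{(r',v)\in b}D^v_{r'}$. On departure, jobs are removed and capabilities reset by the same formula. Shadow strategy SHA$(\varepsilon)$: each job $(r,v)$ associated with $L_j$ is replaced by a top job with the same load and relaxed delay constraint $D_j=\frac{1}{\bar\mu-\lambda_{\min}(1+\varepsilon)^{j+1}}\ge D_r^v$. SHA$(\varepsilon)$ is the minimum-cost placement of the current top jobs such that: each job of $r$ is placed in a single node at a layer at which the deployment of $r$ is feasible; within that node, the job's load may be split fractionally among several VMs running $v$; jobs associated with different ranges never share a VM; each top job's processing latency is at most its relaxed constraint. Upon departures it is recomputed on the remaining requests. *)

theory Defs
  imports "HOL-Analysis.Analysis"
begin

text \<open>VMs are identified by natural numbers (arbitrarily many VMs per node).
  Times are real numbers.\<close>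

record ('n, 'v, 'r) inst =
  Nodes  :: "'n set"            (* datacenters *)
  layer  :: "'n \<Rightarrow> nat"
  dl     :: "nat \<Rightarrow> real"      (* forwarding latency d_l from a leaf to layer l *)
  mubar  :: real                (* maximum computing capability of a VM *)
  VNFs   :: "'v set"
  theta  :: "'v \<Rightarrow> real"      (* computing complexity *)
  kf     :: "nat \<Rightarrow> real"      (* fixed VM cost per layer *)
  kp     :: "nat \<Rightarrow> real"      (* proportional VM cost per layer *)
  Req    :: "'r set"
  VN     :: "'r \<Rightarrow> 'v set"
  arr    :: "'r \<Rightarrow> real"
  dur    :: "'r \<Rightarrow> real"
  load   :: "'r \<Rightarrow> real"      (* traffic load lambda_r *)
  Dr     :: "'r \<Rightarrow> real"      (* end-to-end delay target *)
  leaf   :: "'r \<Rightarrow> 'n"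

definition lmin :: "('n, 'v, 'r) inst \<Rightarrow> real" where
  "lmin I = Inf (load I ` Req I)"

definition M :: "('n, 'v, 'r) inst \<Rightarrow> 'r \<Rightarrow> 'v \<Rightarrow> real" where
  "M I r v = 1 / (mubar I - theta I v * load I r)"

definition ok_layer :: "('n, 'v, 'r) inst \<Rightarrow> 'r \<Rightarrow> nat \<Rightarrow> bool" where
  "ok_layer I r l \<longleftrightarrow> dl I l + (\<Sum>v\<in>VN I r. M I r v) \<le> Dr I r"

definition lstar :: "('n, 'v, 'r) inst \<Rightarrow> 'r \<Rightarrow> nat" where
  "lstar I r = Max {l \<in> layer I ` Nodes I. ok_layer I r l}"

definition Dfair :: "('n, 'v, 'r) inst \<Rightarrow> 'r \<Rightarrow> 'v \<Rightarrow> real" where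
  "Dfair I r v = M I r v / (\<Sum>u\<in>VN I r. M I r u) * (Dr I r - dl I (lstar I r))"

definition valid_inst :: "('n, 'v, 'r) inst \<Rightarrow> bool" where
  "valid_inst I \<longleftrightarrow>
     finite (Nodes I) \<and> Nodes I \<noteq> {} \<and>
     (\<forall>l. dl I l < dl I (Suc l)) \<and>
     (\<forall>l. kf I (Suc l) < kf I l) \<and> (\<forall>l. kp I (Suc l) < kp I l) \<and>
     mubar I > 0 \<and>
     finite (VNFs I) \<and> (\<forall>v\<in>VNFs I. 0 < theta I v \<and> theta I v \<le> 1) \<and>
     finite (Req I) \<and> lmin I > 0 \<and>
     (\<forall>r\<in>Req I. finite (VN I r) \<and> VN I r \<noteq> {} \<and> VN I r \<subseteq> VNFs I \<and>
        dur I r > 0 \<and> load I r \<ge> lmin I \<and>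
        leaf I r \<in> Nodes I \<and> layer I (leaf I r) = 0 \<and>
        (\<forall>v\<in>VN I r. theta I v * load I r < mubar I) \<and>
        (\<exists>l\<in>layer I ` Nodes I. ok_layer I r l))"

definition active :: "('n, 'v, 'r) inst \<Rightarrow> real \<Rightarrow> 'r set" where
  "active I t = {r \<in> Req I. arr I r \<le> t \<and> t < arr I r + dur I r}"

definition jobs :: "('n, 'v, 'r) inst \<Rightarrow> 'r set \<Rightarrow> ('r \<times> 'v) set" where
  "jobs I A = {(r, v). r \<in> A \<and> v \<in> VN I r}"

text \<open>A snapshot: VM \<open>b\<close> is located at node \<open>host b\<close>, runs VNF \<open>vnf b\<close>, has
  allocated capability \<open>mu b\<close>; job \<open>(r,v)\<close> is on VM \<open>asg r v\<close>.\<close>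

definition Lam :: "('n, 'v, 'r) inst \<Rightarrow> 'r set \<Rightarrow> ('r \<Rightarrow> 'v \<Rightarrow> nat) \<Rightarrow> nat \<Rightarrow> real" where
  "Lam I A asg b = (\<Sum>p\<in>{p \<in> jobs I A. asg (fst p) (snd p) = b}. load I (fst p))"

definition proc_lat :: "('n, 'v, 'r) inst \<Rightarrow> 'r set \<Rightarrow> (nat \<Rightarrow> real) \<Rightarrow> ('r \<Rightarrow> 'v \<Rightarrow> nat)
    \<Rightarrow> 'r \<Rightarrow> 'v \<Rightarrow> real" where
  "proc_lat I A mu asg r v = 1 / (mu (asg r v) - theta I v * Lam I A asg (asg r v))"

definition req_lat :: "('n, 'v, 'r) inst \<Rightarrow> 'r set \<Rightarrow> (nat \<Rightarrow> 'n) \<Rightarrow> (nat \<Rightarrow> real)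
    \<Rightarrow> ('r \<Rightarrow> 'v \<Rightarrow> nat) \<Rightarrow> 'r \<Rightarrow> real" where
  "req_lat I A host mu asg r =
     Max ((\<lambda>v. dl I (layer I (host (asg r v)))) ` VN I r) + (\<Sum>v\<in>VN I r. proc_lat I A mu asg r v)"

definition snap_feasible :: "('n, 'v, 'r) inst \<Rightarrow> 'r set \<Rightarrow> (nat \<Rightarrow> 'n) \<Rightarrow> (nat \<Rightarrow> 'v)
    \<Rightarrow> (nat \<Rightarrow> real) \<Rightarrow> ('r \<Rightarrow> 'v \<Rightarrow> nat) \<Rightarrow> bool" where
  "snap_feasible I A host vnf mu asg \<longleftrightarrow>
     (\<forall>r\<in>A. \<forall>v\<in>VN I r.
        host (asg r v) \<in> Nodes I \<and> vnf (asg r v) = v \<and> mu (asg r v) \<le> mubar I \<and>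
        theta I v * Lam I A asg (asg r v) < mu (asg r v) \<and>
        proc_lat I A mu asg r v \<le> Dfair I r v) \<and>
     (\<forall>r\<in>A. req_lat I A host mu asg r \<le> Dr I r)"

definition layer_feasible :: "('n, 'v, 'r) inst \<Rightarrow> 'r \<Rightarrow> nat \<Rightarrow> bool" where
  "layer_feasible I r l \<longleftrightarrow>
     (\<exists>host vnf mu asg. snap_feasible I {r} host vnf mu asg \<and>
        (\<forall>v\<in>VN I r. layer I (host (asg r v)) = l))"

record ('n, 'v, 'r) dep =
  host :: "nat \<Rightarrow> 'n"
  vnf  :: "nat \<Rightarrow> 'v"
  cap  :: "nat \<Rightarrow> real \<Rightarrow> real"   (* capability of VM b at time t *)
  asg  :: "'r \<Rightarrow> 'v \<Rightarrow> nat"      (* VM hosting job (r,v) during its lifetime *)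

definition dep_feasible :: "('n, 'v, 'r) inst \<Rightarrow> ('n, 'v, 'r) dep \<Rightarrow> bool" where
  "dep_feasible I D \<longleftrightarrow>
     (\<forall>t. snap_feasible I (active I t) (host D) (vnf D) (\<lambda>b. cap D b t) (asg D))"

definition used_vms :: "('n, 'v, 'r) inst \<Rightarrow> ('n, 'v, 'r) dep \<Rightarrow> real \<Rightarrow> nat set" where
  "used_vms I D t = (\<lambda>p. asg D (fst p) (snd p)) ` jobs I (active I t)"

definition cost_at :: "('n, 'v, 'r) inst \<Rightarrow> ('n, 'v, 'r) dep \<Rightarrow> real \<Rightarrow> real" where
  "cost_at I D t = (\<Sum>b\<in>used_vms I D t.
      kf I (layer I (host D b)) + kp I (layer I (host D b)) * cap D b t)"

definition total_cost :: "('n, 'v, 'r) inst \<Rightarrow> ('n, 'v, 'r) dep \<Rightarrow> real" where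
  "total_cost I D = integral UNIV (cost_at I D)"

definition is_OPT :: "('n, 'v, 'r) inst \<Rightarrow> ('n, 'v, 'r) dep \<Rightarrow> bool" where
  "is_OPT I D \<longleftrightarrow> dep_feasible I D \<and> cost_at I D integrable_on UNIV \<and>
     (\<forall>D'. dep_feasible I D' \<and> cost_at I D' integrable_on UNIV \<longrightarrow>
        total_cost I D \<le> total_cost I D')"

definition valid_range :: "('n, 'v, 'r) inst \<Rightarrow> real \<Rightarrow> nat \<Rightarrow> bool" where
  "valid_range I \<epsilon> j \<longleftrightarrow> lmin I * (1 + \<epsilon>) ^ (j + 1) < mubar I"

definition in_range :: "('n, 'v, 'r) inst \<Rightarrow> real \<Rightarrow> nat \<Rightarrow> real \<Rightarrow> bool" where
  "in_range I \<epsilon> j x \<longleftrightarrow> valid_range I \<epsilon> j \<and>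
     (if j = 0 then 1 / (mubar I - lmin I) \<le> x \<and> x \<le> 1 / (mubar I - lmin I * (1 + \<epsilon>))
      else 1 / (mubar I - lmin I * (1 + \<epsilon>) ^ j) < x \<and>
           x \<le> 1 / (mubar I - lmin I * (1 + \<epsilon>) ^ (j + 1)))"

definition Dtop :: "('n, 'v, 'r) inst \<Rightarrow> real \<Rightarrow> nat \<Rightarrow> real" where
  "Dtop I \<epsilon> j = 1 / (mubar I - lmin I * (1 + \<epsilon>) ^ (j + 1))"

text \<open>Fractional placement of top jobs: job \<open>(r,v)\<close> is assigned to node
  \<open>snode r v\<close>, and the fraction \<open>frac r v b\<close> of its load is on VM \<open>b\<close>.\<close>
record ('n, 'v, 'r) fplace =
  SB     :: "nat set"
  shost  :: "nat \<Rightarrow> 'n"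
  svnf   :: "nat \<Rightarrow> 'v"
  smu    :: "nat \<Rightarrow> real"
  snode  :: "'r \<Rightarrow> 'v \<Rightarrow> 'n"
  frac   :: "'r \<Rightarrow> 'v \<Rightarrow> nat \<Rightarrow> real"

definition fLam :: "('n, 'v, 'r) inst \<Rightarrow> 'r set \<Rightarrow> ('n, 'v, 'r) fplace \<Rightarrow> nat \<Rightarrow> real" where
  "fLam I A P b = (\<Sum>p\<in>jobs I A. frac P (fst p) (snd p) b * load I (fst p))"

definition sha_valid :: "('n, 'v, 'r) inst \<Rightarrow> real \<Rightarrow> 'r set \<Rightarrow> ('n, 'v, 'r) fplace \<Rightarrow> bool" where
  "sha_valid I \<epsilon> A P \<longleftrightarrow>
     finite (SB P) \<and>
     (\<forall>b\<in>SB P. shost P b \<in> Nodes I \<and> smu P b \<le> mubar I) \<and>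
     (\<forall>(r, v)\<in>jobs I A.
        snode P r v \<in> Nodes I \<and> layer_feasible I r (layer I (snode P r v)) \<and>
        (\<forall>b. 0 \<le> frac P r v b) \<and> (\<Sum>b\<in>SB P. frac P r v b) = 1 \<and>
        (\<forall>b. 0 < frac P r v b \<longrightarrow>
           b \<in> SB P \<and> svnf P b = v \<and> shost P b = snode P r v \<and>
           theta I v * fLam I A P b < smu P b \<and>
           (\<forall>j. in_range I \<epsilon> j (Dfair I r v) \<longrightarrow>
                1 / (smu P b - theta I v * fLam I A P b) \<le> Dtop I \<epsilon> j))) \<and>
     (\<forall>(r, v)\<in>jobs I A. \<forall>(r', v')\<in>jobs I A. \<forall>b j j'.
        0 < frac P r v b \<and> 0 < frac P r' v' b \<and>
        in_range I \<epsilon> j (Dfair I r v) \<and> in_range I \<epsilon> j' (Dfair I r' v') \<longrightarrow> j = j')"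

definition sha_cost :: "('n, 'v, 'r) inst \<Rightarrow> 'r set \<Rightarrow> ('n, 'v, 'r) fplace \<Rightarrow> real" where
  "sha_cost I A P = (\<Sum>b\<in>{b \<in> SB P. \<exists>(r, v)\<in>jobs I A. 0 < frac P r v b}.
      kf I (layer I (shost P b)) + kp I (layer I (shost P b)) * smu P b)"

text \<open>SHA(\<open>\<epsilon>\<close>) at time \<open>t\<close>: a minimum-cost valid placement of the top jobs of
  the requests active at time \<open>t\<close> (recomputed at every arrival/departure).\<close>
definition is_SHA :: "('n, 'v, 'r) inst \<Rightarrow> real \<Rightarrow> real \<Rightarrow> ('n, 'v, 'r) fplace \<Rightarrow> bool" where
  "is_SHA I \<epsilon> t P \<longleftrightarrow> sha_valid I \<epsilon> (active I t) P \<and>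
     (\<forall>P'. sha_valid I \<epsilon> (active I t) P' \<longrightarrow> sha_cost I (active I t) P \<le> sha_cost I (active I t) P')"

end

theory Submission
  imports Defs
begin

text \<open>A job of \<open>r\<close> on a VM \<open>b\<close> sees load \<open>Lam b \<ge> load r\<close> and capability at
  most \<open>mubar\<close>, so its processing latency is at least \<open>M r v\<close>. Hence in any
  feasible deployment of \<open>r\<close>, every layer \<open>l\<close> hosting one of its jobs satisfies
  \<open>dl l + (\<Sum>v. M r v) \<le> Dr r\<close>, and \<open>lstar r\<close> is the highest such layer. OPT is
  feasible while \<open>r\<close> is active, and SHA only uses layers at which \<open>r\<close> alone can be
  deployed feasibly, so the bound holds for both.\<close>

lemma load_pos:
  assumes "valid_inst I" "r \<in> Req I"
  shows "0 < load I r"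
  using assms unfolding valid_inst_def by force

lemma finite_jobs:
  assumes "valid_inst I" "A \<subseteq> Req I"
  shows "finite (jobs I A)"
proof -
  have "finite A" using assms finite_subset unfolding valid_inst_def by blast
  moreover have "jobs I A \<subseteq> Sigma A (VN I)" unfolding jobs_def by auto
  ultimately show ?thesis
    using assms unfolding valid_inst_def by (metis finite_SigmaI finite_subset subsetD)
qed

lemma load_le_Lam:
  assumes "valid_inst I" "A \<subseteq> Req I" "r \<in> A" "v \<in> VN I r"
  shows "load I r \<le> Lam I A a (a r v)"
proof -
  let ?S = "{p \<in> jobs I A. a (fst p) (snd p) = a r v}"
  have "(r, v) \<in> ?S" using assms unfolding jobs_def by auto
  moreover have "finite ?S" using finite_jobs[OF assms(1,2)] by auto
  moreover have "0 \<le> load I (fst p)" if "p \<in> ?S" for p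
    using that assms(1,2) load_pos unfolding jobs_def by (fastforce intro: less_imp_le)
  ultimately have "load I (fst (r, v)) \<le> (\<Sum>p\<in>?S. load I (fst p))"
    by (intro member_le_sum) auto
  then show ?thesis unfolding Lam_def by simp
qed

lemma M_le_proc_lat:
  assumes "valid_inst I" "A \<subseteq> Req I" "r \<in> A" "v \<in> VN I r"
    and "mu (a r v) \<le> mubar I" and "theta I v * Lam I A a (a r v) < mu (a r v)"
  shows "M I r v \<le> proc_lat I A mu a r v"
proof -
  have "0 < theta I v" using assms(1-4) unfolding valid_inst_def by blast
  then have "theta I v * load I r \<le> theta I v * Lam I A a (a r v)"
    using load_le_Lam[OF assms(1-4)] by simp
  then have "mu (a r v) - theta I v * Lam I A a (a r v) \<le> mubar I - theta I v * load I r"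
    using assms(5) by linarith
  then show ?thesis
    unfolding M_def proc_lat_def using assms(6) by (simp add: frac_le)
qed

lemma snap_feasible_ok_layer:
  assumes vi: "valid_inst I" and A: "A \<subseteq> Req I" "r \<in> A" and v: "v \<in> VN I r"
    and feas: "snap_feasible I A h f mu a"
  shows "ok_layer I r (layer I (h (a r v)))"
proof -
  have "(\<Sum>u\<in>VN I r. M I r u) \<le> (\<Sum>u\<in>VN I r. proc_lat I A mu a r u)"
    using feas A unfolding snap_feasible_def
    by (intro sum_mono M_le_proc_lat[OF vi A]) auto
  moreover have "dl I (layer I (h (a r v)))
      \<le> Max ((\<lambda>u. dl I (layer I (h (a r u)))) ` VN I r)"
    using vi A v unfolding valid_inst_def by (intro Max_ge) auto
  moreover have "req_lat I A h mu a r \<le> Dr I r"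
    using feas A unfolding snap_feasible_def by blast
  ultimately show ?thesis unfolding ok_layer_def req_lat_def by linarith
qed

lemma ok_layer_le_lstar:
  assumes "valid_inst I" "n \<in> Nodes I" "ok_layer I r (layer I n)"
  shows "layer I n \<le> lstar I r"
  using assms unfolding lstar_def valid_inst_def by (intro Max_ge) auto

lemma layer_feasible_ok_layer:
  assumes vi: "valid_inst I" and r: "r \<in> Req I" and lf: "layer_feasible I r l"
  shows "ok_layer I r l"
proof -
  obtain h f mu a where feas: "snap_feasible I {r} h f mu a"
    and at_l: "\<forall>v\<in>VN I r. layer I (h (a r v)) = l"
    using lf unfolding layer_feasible_def by blast
  obtain v where v: "v \<in> VN I r" using vi r unfolding valid_inst_def by blast
  show ?thesis
    using snap_feasible_ok_layer[OF vi _ _ v feas] r at_l v by auto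
qed

lemma arr_active:
  assumes "valid_inst I" "r \<in> Req I"
  shows "r \<in> active I (arr I r)"
  using assms unfolding active_def valid_inst_def by auto

lemma dep_feasible_layer_le_lstar:
  assumes vi: "valid_inst I" and r: "r \<in> Req I" and v: "v \<in> VN I r"
    and "dep_feasible I D"
  shows "host D (asg D r v) \<in> Nodes I \<and> layer I (host D (asg D r v)) \<le> lstar I r"
proof -
  let ?t = "arr I r"
  have feas: "snap_feasible I (active I ?t) (host D) (vnf D) (\<lambda>b. cap D b ?t) (asg D)"
    using assms(4) unfolding dep_feasible_def by blast
  have act: "active I ?t \<subseteq> Req I" "r \<in> active I ?t"
    using arr_active[OF vi r] unfolding active_def by auto
  have node: "host D (asg D r v) \<in> Nodes I"
    using feas act v unfolding snap_feasible_def by blast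
  show ?thesis
    using node ok_layer_le_lstar[OF vi node snap_feasible_ok_layer[OF vi act v feas]] by blast
qed

lemma sha_valid_layer_le_lstar:
  assumes vi: "valid_inst I" and A: "A \<subseteq> Req I" "r \<in> A" and v: "v \<in> VN I r"
    and "sha_valid I \<epsilon> A P"
  shows "snode P r v \<in> Nodes I \<and> layer I (snode P r v) \<le> lstar I r"
proof -
  have "(r, v) \<in> jobs I A" using A v unfolding jobs_def by blast
  then have node: "snode P r v \<in> Nodes I"
    and lf: "layer_feasible I r (layer I (snode P r v))"
    using assms(5) unfolding sha_valid_def by fastforce+
  show ?thesis
    using node ok_layer_le_lstar[OF vi node layer_feasible_ok_layer[OF vi _ lf]] A by blast
qed

theorem lemma2:
  fixes I :: "('n, 'v, 'r) inst" and \<epsilon> :: real and r :: 'r and i :: 'n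
  assumes "valid_inst I" and "\<epsilon> > 0" and "r \<in> Req I"
    and "i \<in> Nodes I" and "layer I i = lstar I r"
  shows "(\<forall>D. is_OPT I D \<longrightarrow>
            (\<forall>v\<in>VN I r. host D (asg D r v) \<in> Nodes I \<and> layer I (host D (asg D r v)) \<le> lstar I r))
       \<and> (\<forall>t P. r \<in> active I t \<longrightarrow> is_SHA I \<epsilon> t P \<longrightarrow>
            (\<forall>v\<in>VN I r. snode P r v \<in> Nodes I \<and> layer I (snode P r v) \<le> lstar I r))"
proof (intro conjI allI impI ballI)
  fix D v assume "is_OPT I D" "v \<in> VN I r"
  then show "host D (asg D r v) \<in> Nodes I" "layer I (host D (asg D r v)) \<le> lstar I r"
    using dep_feasible_layer_le_lstar[OF assms(1,3)] unfolding is_OPT_def by blast+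
next
  fix t P v assume "r \<in> active I t" "is_SHA I \<epsilon> t P" "v \<in> VN I r"
  moreover have "active I t \<subseteq> Req I" unfolding active_def by blast
  ultimately show "snode P r v \<in> Nodes I" "layer I (snode P r v) \<le> lstar I r"
    using sha_valid_layer_le_lstar[OF assms(1)] unfolding is_SHA_def by blast+
qed

end
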